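(* Let $n,p$ be positive integers and $x_1,\dots,x_n\in\mathbb R^p$. Define $$C_{p,n}(x_1;x_2,\dots,x_n)=\begin{cases}\sup_{a\in(0,\infty)} x_1^T\,(x_1x_1^T+aI_p)^{-2}x_1, & n=1,\\[2pt] \sup_{a\in(0,\infty)^n} x_1^T\Big(x_1x_1^T+\sum_{i=2}^n a_ix_ix_i^T+a_1I_p\Big)^{-2}x_1, & n\ge2.\end{cases}$$ Then $C_{p,n}(x_1;x_2,\dots,x_n)<\infty$.
   Context: $I_p$ is the $p\times p$ identity matrix and $a=(a_1,\dots,a_n)$. *)

theory Defs
  imports "HOL-Analysis.Analysis"
begin

definition outer :: "real^'p \<Rightarrow> real^'p^'p" where
  "outer x = (\<chi> i j. x $ i * x $ j)"

definition Cmat :: "nat \<Rightarrow> (nat \<Rightarrow> real^'p) \<Rightarrow> (nat \<Rightarrow> real) \<Rightarrow> real^'p^'p" where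
  "Cmat n x a = outer (x 1) + (\<Sum>i\<in>{2..n}. a i *\<^sub>R outer (x i)) + a 1 *\<^sub>R mat 1"

definition C :: "nat \<Rightarrow> (nat \<Rightarrow> real^'p) \<Rightarrow> ereal" where
  "C n x = (SUP a \<in> {a. \<forall>i\<in>{1..n}. a i > 0}.
      ereal (x 1 \<bullet> ((matrix_inv (Cmat n x a) ** matrix_inv (Cmat n x a)) *v x 1)))"

end

theory Submission
  imports Defs
begin

text \<open>Put y = M^-1 x_1 for the matrix M of the statement. Since M is symmetric, the quantity
  under the supremum is |y|^2, and y minimises the weighted ridge regression loss
  a_1 |y|^2 + (x_1 \<bullet> y - 1)^2 + \<Sum>_{i\<ge>2} a_i (x_i \<bullet> y)^2.
  It therefore suffices that the minimisers of such losses over an affine set L stay bounded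
  while all weights range over (0, \<infinity>). This goes by induction on the number of data terms:
  splitting off one term w_j (r_j \<bullet> y - c_j)^2, the minimiser of the full loss lies on the segment
  between the minimiser of the remaining loss over L and its minimiser over the slice
  L \<inter> {r_j \<bullet> y = c_j}. Both ends are bounded by induction, so all minimisers lie in the convex
  hull of two bounded sets.\<close>

definition ridge_loss ::
    "real \<Rightarrow> ('i \<Rightarrow> real) \<Rightarrow> ('i \<Rightarrow> 'v::real_inner) \<Rightarrow> ('i \<Rightarrow> real) \<Rightarrow> 'i set \<Rightarrow> 'v \<Rightarrow> real" where
  "ridge_loss a w r c I y = a * (y \<bullet> y) + (\<Sum>i\<in>I. w i * (r i \<bullet> y - c i)\<^sup>2)"

definition ridge_grad ::
    "real \<Rightarrow> ('i \<Rightarrow> real) \<Rightarrow> ('i \<Rightarrow> 'v::real_inner) \<Rightarrow> ('i \<Rightarrow> real) \<Rightarrow> 'i set \<Rightarrow> 'v \<Rightarrow> 'v \<Rightarrow> real" where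
  "ridge_grad a w r c I y d = a * (y \<bullet> d) + (\<Sum>i\<in>I. w i * (r i \<bullet> y - c i) * (r i \<bullet> d))"

definition ridge_hess :: "real \<Rightarrow> ('i \<Rightarrow> real) \<Rightarrow> ('i \<Rightarrow> 'v::real_inner) \<Rightarrow> 'i set \<Rightarrow> 'v \<Rightarrow> real" where
  "ridge_hess a w r I d = a * (d \<bullet> d) + (\<Sum>i\<in>I. w i * (r i \<bullet> d)\<^sup>2)"

definition ridge_argmins :: "('i \<Rightarrow> 'v::real_inner) \<Rightarrow> ('i \<Rightarrow> real) \<Rightarrow> 'i set \<Rightarrow> 'v set \<Rightarrow> 'v set" where
  "ridge_argmins r c I L =
     {y. \<exists>a w. a > 0 \<and> (\<forall>i\<in>I. w i > 0) \<and> is_arg_min (ridge_loss a w r c I) (\<lambda>u. u \<in> L) y}"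

lemma ridge_loss_add_scaleR:
  "ridge_loss a w r c I (y + t *\<^sub>R d) =
     ridge_loss a w r c I y + 2 * t * ridge_grad a w r c I y d + t\<^sup>2 * ridge_hess a w r I d"
proof -
  have "w i * (r i \<bullet> (y + t *\<^sub>R d) - c i)\<^sup>2 = w i * (r i \<bullet> y - c i)\<^sup>2
      + 2 * t * (w i * (r i \<bullet> y - c i) * (r i \<bullet> d)) + t\<^sup>2 * (w i * (r i \<bullet> d)\<^sup>2)" for i
    by (simp add: inner_add_right power2_eq_square algebra_simps)
  then have "(\<Sum>i\<in>I. w i * (r i \<bullet> (y + t *\<^sub>R d) - c i)\<^sup>2) = (\<Sum>i\<in>I. w i * (r i \<bullet> y - c i)\<^sup>2)
      + 2 * t * (\<Sum>i\<in>I. w i * (r i \<bullet> y - c i) * (r i \<bullet> d)) + t\<^sup>2 * (\<Sum>i\<in>I. w i * (r i \<bullet> d)\<^sup>2)"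
    by (simp add: sum.distrib sum_distrib_left)
  moreover have "a * ((y + t *\<^sub>R d) \<bullet> (y + t *\<^sub>R d))
      = a * (y \<bullet> y) + 2 * t * (a * (y \<bullet> d)) + t\<^sup>2 * (a * (d \<bullet> d))"
    by (simp add: inner_add_left inner_add_right inner_commute power2_eq_square algebra_simps)
  ultimately show ?thesis
    by (simp add: ridge_loss_def ridge_grad_def ridge_hess_def algebra_simps)
qed

lemma ridge_loss_insert:
  assumes "finite I" "j \<notin> I"
  shows "ridge_loss a w r c (insert j I) y = w j * (r j \<bullet> y - c j)\<^sup>2 + ridge_loss a w r c I y"
  using assms by (simp add: ridge_loss_def algebra_simps)

lemma ridge_loss_ge:
  "a \<ge> 0 \<Longrightarrow> \<forall>i\<in>I. w i \<ge> 0 \<Longrightarrow> ridge_loss a w r c I y \<ge> a * (y \<bullet> y)"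
  unfolding ridge_loss_def by (auto intro!: sum_nonneg)

lemma ridge_hess_ge:
  "a \<ge> 0 \<Longrightarrow> \<forall>i\<in>I. w i \<ge> 0 \<Longrightarrow> ridge_hess a w r I d \<ge> a * (d \<bullet> d)"
  unfolding ridge_hess_def by (auto intro!: sum_nonneg)

lemma ridge_hess_nonneg:
  "a \<ge> 0 \<Longrightarrow> \<forall>i\<in>I. w i \<ge> 0 \<Longrightarrow> ridge_hess a w r I d \<ge> 0"
  by (meson ridge_hess_ge inner_ge_zero mult_nonneg_nonneg order_trans)

lemma ridge_grad_convex_comb:
  "ridge_grad a w r c I ((1 - \<theta>) *\<^sub>R y0 + \<theta> *\<^sub>R y1) d
     = (1 - \<theta>) * ridge_grad a w r c I y0 d + \<theta> * ridge_grad a w r c I y1 d"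
proof -
  have "w i * (r i \<bullet> ((1 - \<theta>) *\<^sub>R y0 + \<theta> *\<^sub>R y1) - c i) * (r i \<bullet> d)
      = (1 - \<theta>) * (w i * (r i \<bullet> y0 - c i) * (r i \<bullet> d)) + \<theta> * (w i * (r i \<bullet> y1 - c i) * (r i \<bullet> d))" for i
    by (simp add: inner_add_right algebra_simps)
  then have "(\<Sum>i\<in>I. w i * (r i \<bullet> ((1 - \<theta>) *\<^sub>R y0 + \<theta> *\<^sub>R y1) - c i) * (r i \<bullet> d))
      = (1 - \<theta>) * (\<Sum>i\<in>I. w i * (r i \<bullet> y0 - c i) * (r i \<bullet> d))
        + \<theta> * (\<Sum>i\<in>I. w i * (r i \<bullet> y1 - c i) * (r i \<bullet> d))"
    by (simp add: sum.distrib sum_distrib_left)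
  then show ?thesis
    by (simp add: ridge_grad_def inner_add_left algebra_simps)
qed

lemma linear_term_zero_if_quadratic_nonneg:
  fixes g h :: real
  assumes "h \<ge> 0" "\<And>t. 2 * t * g + t\<^sup>2 * h \<ge> 0"
  shows "g = 0"
proof (rule ccontr)
  assume "g \<noteq> 0"
  define t where "t = - g / (h + 1)"
  have g: "g = - t * (h + 1)" and "t \<noteq> 0"
    using assms(1) \<open>g \<noteq> 0\<close> by (auto simp: t_def)
  have "2 * t * g + t\<^sup>2 * h = t\<^sup>2 * (- h - 2)"
    by (simp add: g power2_eq_square algebra_simps)
  also have "\<dots> < 0"
    using \<open>t \<noteq> 0\<close> assms(1) by (intro mult_pos_neg) auto
  finally show False
    using assms(2) by (metis not_le)
qed

lemma is_arg_min_ridge_loss_iff: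
  assumes "affine L" "y \<in> L" "a \<ge> 0" "\<forall>i\<in>I. w i \<ge> 0"
  shows "is_arg_min (ridge_loss a w r c I) (\<lambda>u. u \<in> L) y
    \<longleftrightarrow> (\<forall>u\<in>L. ridge_grad a w r c I y (u - y) = 0)"
proof
  assume min: "is_arg_min (ridge_loss a w r c I) (\<lambda>u. u \<in> L) y"
  show "\<forall>u\<in>L. ridge_grad a w r c I y (u - y) = 0"
  proof
    fix u assume "u \<in> L"
    have "2 * t * ridge_grad a w r c I y (u - y) + t\<^sup>2 * ridge_hess a w r I (u - y) \<ge> 0" for t
    proof -
      have "y + t *\<^sub>R (u - y) \<in> L"
        using mem_affine_3_minus[OF assms(1,2) \<open>u \<in> L\<close> assms(2)] by simp
      with min have "ridge_loss a w r c I y \<le> ridge_loss a w r c I (y + t *\<^sub>R (u - y))"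
        by (simp add: is_arg_min_linorder)
      then show ?thesis
        by (simp add: ridge_loss_add_scaleR)
    qed
    then show "ridge_grad a w r c I y (u - y) = 0"
      using linear_term_zero_if_quadratic_nonneg ridge_hess_nonneg[OF assms(3,4)] by blast
  qed
next
  assume grad: "\<forall>u\<in>L. ridge_grad a w r c I y (u - y) = 0"
  have "ridge_loss a w r c I y \<le> ridge_loss a w r c I u" if "u \<in> L" for u
    using ridge_loss_add_scaleR[of a w r c I y 1 "u - y"] grad that
      ridge_hess_nonneg[OF assms(3,4)] by simp
  then show "is_arg_min (ridge_loss a w r c I) (\<lambda>u. u \<in> L) y"
    using assms(2) by (simp add: is_arg_min_linorder)
qed

lemma ridge_loss_argmin_unique:
  assumes "affine L" "a > 0" "\<forall>i\<in>I. w i \<ge> 0"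
    and "is_arg_min (ridge_loss a w r c I) (\<lambda>u. u \<in> L) y"
    and "is_arg_min (ridge_loss a w r c I) (\<lambda>u. u \<in> L) y'"
  shows "y = y'"
proof -
  have L: "y \<in> L" "y' \<in> L"
    using assms(4,5) by (auto simp: is_arg_min_linorder)
  then have "ridge_grad a w r c I y (y' - y) = 0"
    using is_arg_min_ridge_loss_iff[OF assms(1) L(1) _ assms(3)] assms(2,4) by simp
  then have "ridge_loss a w r c I y' = ridge_loss a w r c I y + ridge_hess a w r I (y' - y)"
    using ridge_loss_add_scaleR[of a w r c I y 1 "y' - y"] by simp
  then have "ridge_hess a w r I (y' - y) \<le> 0"
    using assms(5) L by (force simp: is_arg_min_linorder)
  moreover have "ridge_hess a w r I (y' - y) \<ge> a * ((y' - y) \<bullet> (y' - y))"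
    using assms(2,3) by (intro ridge_hess_ge) auto
  ultimately have "a * ((y' - y) \<bullet> (y' - y)) \<le> 0"
    by linarith
  then have "(y' - y) \<bullet> (y' - y) \<le> 0"
    using assms(2) by (simp add: mult_le_0_iff)
  then show ?thesis
    by (metis eq_iff_diff_eq_0 inner_gt_zero_iff not_le)
qed

lemma ridge_loss_argmin_exists:
  fixes r :: "'i \<Rightarrow> 'v::euclidean_space"
  assumes "closed L" "L \<noteq> {}" "a > 0" "\<forall>i\<in>I. w i \<ge> 0"
  obtains y where "is_arg_min (ridge_loss a w r c I) (\<lambda>u. u \<in> L) y"
proof -
  let ?F = "ridge_loss a w r c I"
  obtain u0 where u0: "u0 \<in> L"
    using assms(2) by blast
  define R where "R = sqrt (?F u0 / a)"
  have far: "?F u0 \<le> ?F u" if "norm u \<ge> R" for u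
  proof -
    have "?F u0 \<ge> 0"
      using ridge_loss_ge[of a I w] assms(3,4)
      by (meson inner_ge_zero less_imp_le mult_nonneg_nonneg order_trans)
    then have "R \<ge> 0" and F0: "?F u0 = a * R\<^sup>2"
      using assms(3) by (simp_all add: R_def)
    have "a * R\<^sup>2 \<le> a * (norm u)\<^sup>2"
      using that assms(3) \<open>R \<ge> 0\<close> by (intro mult_left_mono power_mono) auto
    also have "\<dots> \<le> ?F u"
      using assms(3,4) by (simp add: power2_norm_eq_inner ridge_loss_ge)
    finally show ?thesis
      using F0 by simp
  qed
  define K where "K = L \<inter> cball 0 (max R (norm u0))"
  have "compact K"
    using assms(1) by (auto simp: K_def intro: closed_Int_compact)
  moreover have "u0 \<in> K"
    by (simp add: K_def u0)
  moreover have "continuous_on K ?F"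
    unfolding ridge_loss_def by (intro continuous_intros)
  ultimately obtain y where y: "y \<in> K" "\<And>u. u \<in> K \<Longrightarrow> ?F y \<le> ?F u"
    using continuous_attains_inf by (metis empty_iff)
  have "?F y \<le> ?F u" if "u \<in> L" for u
  proof (cases "u \<in> K")
    case False
    then have "?F u0 \<le> ?F u"
      using that by (intro far) (auto simp: K_def)
    then show ?thesis
      using y(2)[OF \<open>u0 \<in> K\<close>] by linarith
  qed (use y in blast)
  with y(1) show ?thesis
    by (intro that) (auto simp: is_arg_min_linorder K_def)
qed

lemma affine_meets_hyperplane:
  assumes "affine L" "u \<in> L" "v \<in> L" "b \<bullet> u \<noteq> b \<bullet> v"
  obtains p where "p \<in> L" "b \<bullet> p = \<beta>"
proof
  define p where "p = v + ((\<beta> - b \<bullet> v) / (b \<bullet> (u - v))) *\<^sub>R (u - v)"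
  show "p \<in> L"
    unfolding p_def using mem_affine_3_minus[OF assms(1,3,2,3)] .
  show "b \<bullet> p = \<beta>"
    using assms(4) by (simp add: p_def inner_add_right inner_diff_right)
qed

text \<open>The gradient condition is linear in the minimiser, so the minimisers on the parallel
  slices of L interpolate affinely between those on two of them.\<close>
lemma ridge_argmin_slice_convex_comb:
  assumes "affine L" "a \<ge> 0" "\<forall>i\<in>I. w i \<ge> 0"
    and y0: "is_arg_min (ridge_loss a w r c I) (\<lambda>u. u \<in> L) y0"
    and y1: "is_arg_min (ridge_loss a w r c I) (\<lambda>u. u \<in> L \<inter> {u. b \<bullet> u = \<beta>}) y1"
    and z: "z = (1 - \<theta>) *\<^sub>R y0 + \<theta> *\<^sub>R y1"
  shows "is_arg_min (ridge_loss a w r c I) (\<lambda>u. u \<in> L \<inter> {u. b \<bullet> u = b \<bullet> z}) z"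
proof -
  let ?L1 = "L \<inter> {u. b \<bullet> u = \<beta>}"
  have "affine ?L1"
    using assms(1) by (intro affine_Int affine_hyperplane)
  have L: "y0 \<in> L" "y1 \<in> ?L1"
    using y0 y1 by (auto simp: is_arg_min_linorder)
  then have "z \<in> L"
    unfolding z using mem_affine[OF assms(1)] by auto
  have "ridge_loss a w r c I z \<le> ridge_loss a w r c I u"
    if u: "u \<in> L" "b \<bullet> u = b \<bullet> z" for u
  proof -
    define d where "d = u - z"
    have "y0 + d \<in> L"
      unfolding d_def using mem_affine_3_minus[OF assms(1) L(1) u(1) \<open>z \<in> L\<close>, of 1] by simp
    then have "ridge_grad a w r c I y0 d = 0"
      using y0 is_arg_min_ridge_loss_iff[OF assms(1) L(1) assms(2,3)] by force
    moreover have "y1 + d \<in> ?L1"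
      using mem_affine_3_minus[OF assms(1) _ u(1) \<open>z \<in> L\<close>, of y1 1] L u(2)
      by (simp add: d_def inner_add_right inner_diff_right)
    then have "ridge_grad a w r c I y1 d = 0"
      using y1 is_arg_min_ridge_loss_iff[OF \<open>affine ?L1\<close> L(2) assms(2,3)] by force
    ultimately have "ridge_grad a w r c I z d = 0"
      unfolding z ridge_grad_convex_comb by simp
    then have "ridge_loss a w r c I u = ridge_loss a w r c I z + ridge_hess a w r I d"
      using ridge_loss_add_scaleR[of a w r c I z 1 d] by (simp add: d_def)
    then show ?thesis
      using ridge_hess_nonneg[OF assms(2,3)] by simp
  qed
  with \<open>z \<in> L\<close> show ?thesis
    by (simp add: is_arg_min_linorder)
qed

lemma between_0_1_if_quadratic_le_ends:
  fixes \<alpha> \<beta> \<theta> :: real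
  assumes "\<alpha> > 0" "\<beta> \<ge> 0"
    and "\<alpha> * (1 - \<theta>)\<^sup>2 + \<beta> * \<theta>\<^sup>2 \<le> \<alpha>" "\<alpha> * (1 - \<theta>)\<^sup>2 + \<beta> * \<theta>\<^sup>2 \<le> \<beta>"
  shows "0 \<le> \<theta> \<and> \<theta> \<le> 1"
proof (intro conjI; rule ccontr)
  assume "\<not> 0 \<le> \<theta>"
  then have "1 < (1 - \<theta>)\<^sup>2"
    by (intro one_less_power) auto
  then have "\<alpha> * 1 < \<alpha> * (1 - \<theta>)\<^sup>2"
    using assms(1) by (intro mult_strict_left_mono)
  moreover have "\<beta> * \<theta>\<^sup>2 \<ge> 0"
    using assms(2) by simp
  ultimately show False
    using assms(3) by linarith
next
  assume "\<not> \<theta> \<le> 1"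
  then have "1 \<le> \<theta>\<^sup>2"
    by (intro one_le_power) auto
  then have "\<beta> * 1 \<le> \<beta> * \<theta>\<^sup>2"
    using assms(2) by (rule mult_left_mono)
  moreover have "0 < \<alpha> * (1 - \<theta>)\<^sup>2"
    using assms(1) \<open>\<not> \<theta> \<le> 1\<close> by simp
  ultimately show False
    using assms(4) by linarith
qed

lemma ridge_argmin_insert_on_line:
  assumes "finite I" "j \<notin> I" "affine L" "a > 0" "\<forall>i\<in>insert j I. w i > 0"
    and y: "is_arg_min (ridge_loss a w r c (insert j I)) (\<lambda>u. u \<in> L) y"
    and y0: "is_arg_min (ridge_loss a w r c I) (\<lambda>u. u \<in> L) y0"
    and y1: "is_arg_min (ridge_loss a w r c I) (\<lambda>u. u \<in> L \<inter> {u. r j \<bullet> u = c j}) y1"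
    and "r j \<bullet> y0 \<noteq> c j"
  obtains \<theta> where "y = (1 - \<theta>) *\<^sub>R y0 + \<theta> *\<^sub>R y1"
proof -
  let ?F = "ridge_loss a w r c (insert j I)" and ?G = "ridge_loss a w r c I"
  define \<theta> where "\<theta> = 1 - (r j \<bullet> y - c j) / (r j \<bullet> y0 - c j)"
  define z where "z = (1 - \<theta>) *\<^sub>R y0 + \<theta> *\<^sub>R y1"
  have "r j \<bullet> y1 = c j" "y \<in> L"
    using y y1 by (auto simp: is_arg_min_linorder)
  then have "r j \<bullet> z - c j = (1 - \<theta>) * (r j \<bullet> y0 - c j)"
    by (simp add: z_def inner_add_right algebra_simps)
  also have "\<dots> = r j \<bullet> y - c j"
    using assms(9) by (simp add: \<theta>_def)
  finally have "r j \<bullet> y = r j \<bullet> z"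
    by simp
  moreover have "is_arg_min ?G (\<lambda>u. u \<in> L \<inter> {u. r j \<bullet> u = r j \<bullet> z}) z"
    using ridge_argmin_slice_convex_comb[OF assms(3) _ _ y0 y1 z_def] assms(4,5)
    by (simp add: less_imp_le)
  ultimately have "?F z \<le> ?F y" "z \<in> L"
    using \<open>y \<in> L\<close> by (auto simp: is_arg_min_linorder ridge_loss_insert[OF assms(1,2)])
  with y have "is_arg_min ?F (\<lambda>u. u \<in> L) z"
    by (auto simp: is_arg_min_linorder)
  then have "y = z"
    using ridge_loss_argmin_unique[OF assms(3,4) _ y] assms(5) by (simp add: less_imp_le)
  then show ?thesis
    by (intro that) (simp add: z_def)
qed

lemma ridge_argmin_insert_on_segment:
  assumes "finite I" "j \<notin> I" "affine L" "a > 0" "\<forall>i\<in>insert j I. w i > 0"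
    and y: "is_arg_min (ridge_loss a w r c (insert j I)) (\<lambda>u. u \<in> L) y"
    and y0: "is_arg_min (ridge_loss a w r c I) (\<lambda>u. u \<in> L) y0"
    and y1: "is_arg_min (ridge_loss a w r c I) (\<lambda>u. u \<in> L \<inter> {u. r j \<bullet> u = c j}) y1"
    and "r j \<bullet> y0 \<noteq> c j"
  shows "y \<in> closed_segment y0 y1"
proof -
  let ?F = "ridge_loss a w r c (insert j I)" and ?G = "ridge_loss a w r c I"
  obtain \<theta> where y_eq: "y = (1 - \<theta>) *\<^sub>R y0 + \<theta> *\<^sub>R y1"
    using ridge_argmin_insert_on_line[OF assms] .
  text \<open>On the line through y0 and y1 the loss is a quadratic in the parameter; comparing
    its value at y with those at the two ends forces \<theta> into [0,1].\<close>
  define D where "D = y1 - y0"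
  define res where "res u = r j \<bullet> u - c j" for u
  have w: "a \<ge> 0" "\<forall>i\<in>I. w i \<ge> 0" "w j > 0"
    using assms(4,5) by auto
  have L: "y0 \<in> L" "y1 \<in> L" "res y1 = 0"
    using y0 y1 by (auto simp: is_arg_min_linorder res_def)
  have "ridge_grad a w r c I y0 D = 0"
    using y0 L(2) is_arg_min_ridge_loss_iff[OF assms(3) L(1) w(1,2)] by (auto simp: D_def)
  then have "?G (y0 + t *\<^sub>R D) = ?G y0 + ridge_hess a w r I D * t\<^sup>2" for t
    by (simp add: ridge_loss_add_scaleR)
  moreover have "res (y0 + t *\<^sub>R D) = (1 - t) * res y0" for t
    using L(3) by (simp add: res_def D_def inner_add_right inner_diff_right algebra_simps)
  moreover define \<alpha> \<beta> where "\<alpha> = w j * (res y0)\<^sup>2" and "\<beta> = ridge_hess a w r I D"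
  ultimately have line: "?F (y0 + t *\<^sub>R D) = ?G y0 + \<alpha> * (1 - t)\<^sup>2 + \<beta> * t\<^sup>2" for t
    by (simp add: ridge_loss_insert[OF assms(1,2)] power_mult_distrib res_def)
  have "y0 + \<theta> *\<^sub>R D = y" "y0 + 0 *\<^sub>R D = y0" "y0 + 1 *\<^sub>R D = y1"
    by (simp_all add: y_eq D_def algebra_simps)
  moreover have "?F y \<le> ?F y0" "?F y \<le> ?F y1"
    using y L(1,2) by (auto simp: is_arg_min_linorder)
  moreover have "\<alpha> > 0" "\<beta> \<ge> 0"
    using w assms(9) ridge_hess_nonneg[OF w(1,2)] by (simp_all add: \<alpha>_def \<beta>_def res_def)
  ultimately have "0 \<le> \<theta> \<and> \<theta> \<le> 1"
    using line[of \<theta>] line[of 0] line[of 1] by (intro between_0_1_if_quadratic_le_ends) auto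
  then show ?thesis
    by (auto simp: y_eq closed_segment_def)
qed

lemma ridge_argmin_insert_mem_convex_hull:
  fixes r :: "'i \<Rightarrow> 'v::euclidean_space"
  assumes "finite I" "j \<notin> I" "affine L" "closed L" "a > 0" "\<forall>i\<in>insert j I. w i > 0"
    and y: "is_arg_min (ridge_loss a w r c (insert j I)) (\<lambda>u. u \<in> L) y"
  shows "y \<in> convex hull (ridge_argmins r c I L \<union> ridge_argmins r c I (L \<inter> {u. r j \<bullet> u = c j}))"
proof -
  let ?F = "ridge_loss a w r c (insert j I)" and ?G = "ridge_loss a w r c I"
  let ?L1 = "L \<inter> {u. r j \<bullet> u = c j}"
  have w: "\<forall>i\<in>I. w i > 0" "\<forall>i\<in>I. w i \<ge> 0" "w j > 0"
    using assms(6) by auto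
  have "y \<in> L"
    using y by (simp add: is_arg_min_linorder)
  then obtain y0 where y0: "is_arg_min ?G (\<lambda>u. u \<in> L) y0"
    using ridge_loss_argmin_exists[OF assms(4) _ assms(5) w(2)] by blast
  then have y0_mem: "y0 \<in> ridge_argmins r c I L"
    using assms(5) w(1) unfolding ridge_argmins_def by blast
  show ?thesis
  proof (cases "\<forall>u\<in>L. (r j \<bullet> y0 - c j)\<^sup>2 \<le> (r j \<bullet> u - c j)\<^sup>2")
    case True
    have "?F y0 \<le> ?F u" if "u \<in> L" for u
    proof -
      have "?G y0 \<le> ?G u"
        using y0 that by (simp add: is_arg_min_linorder)
      moreover have "w j * (r j \<bullet> y0 - c j)\<^sup>2 \<le> w j * (r j \<bullet> u - c j)\<^sup>2"
        using True that w(3) by (simp add: mult_left_mono)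
      ultimately show ?thesis
        by (simp add: ridge_loss_insert[OF assms(1,2)])
    qed
    with y0 have "is_arg_min ?F (\<lambda>u. u \<in> L) y0"
      by (simp add: is_arg_min_linorder)
    moreover have "\<forall>i\<in>insert j I. w i \<ge> 0"
      using assms(6) by (simp add: less_imp_le)
    ultimately have "y = y0"
      using ridge_loss_argmin_unique[OF assms(3,5) _ y] by blast
    then show ?thesis
      using y0_mem by (simp add: hull_inc)
  next
    case False
    then obtain u where "u \<in> L" "(r j \<bullet> u - c j)\<^sup>2 < (r j \<bullet> y0 - c j)\<^sup>2"
      by (meson not_le)
    have "y0 \<in> L"
      using y0 by (simp add: is_arg_min_linorder)
    have "r j \<bullet> y0 \<noteq> c j" "r j \<bullet> u \<noteq> r j \<bullet> y0"
      using \<open>(r j \<bullet> u - c j)\<^sup>2 < (r j \<bullet> y0 - c j)\<^sup>2\<close> by (auto simp: not_less[symmetric])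
    then have "?L1 \<noteq> {}"
      using affine_meets_hyperplane[OF assms(3) \<open>u \<in> L\<close> \<open>y0 \<in> L\<close>, of "r j" "c j"] by blast
    moreover have "closed ?L1"
      using assms(4) by (intro closed_Int closed_hyperplane)
    ultimately obtain y1 where y1: "is_arg_min ?G (\<lambda>u. u \<in> ?L1) y1"
      using ridge_loss_argmin_exists[OF _ _ assms(5) w(2)] by blast
    then have y1_mem: "y1 \<in> ridge_argmins r c I ?L1"
      using assms(5) w(1) unfolding ridge_argmins_def by blast
    have "y \<in> closed_segment y0 y1"
      using ridge_argmin_insert_on_segment[OF assms(1-3,5,6) y y0 y1 \<open>r j \<bullet> y0 \<noteq> c j\<close>] .
    also have "\<dots> \<subseteq> convex hull (ridge_argmins r c I L \<union> ridge_argmins r c I ?L1)"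
      unfolding segment_convex_hull using y0_mem y1_mem by (intro hull_mono) auto
    finally show ?thesis .
  qed
qed

theorem bounded_ridge_argmins:
  fixes r :: "'i \<Rightarrow> 'v::euclidean_space"
  assumes "finite I" "affine L" "closed L"
  shows "bounded (ridge_argmins r c I L)"
  using assms
proof (induction I arbitrary: L rule: finite_induct)
  case empty
  show ?case
  proof (cases "L = {}")
    case False
    then obtain u where "u \<in> L"
      by blast
    have "norm y \<le> norm u" if "y \<in> ridge_argmins r c {} L" for y
    proof -
      obtain a w where "a > 0" "is_arg_min (ridge_loss a w r c {}) (\<lambda>u. u \<in> L) y"
        using \<open>y \<in> ridge_argmins r c {} L\<close> unfolding ridge_argmins_def by blast
      then have "a * (y \<bullet> y) \<le> a * (u \<bullet> u)"
        using \<open>u \<in> L\<close> by (simp add: is_arg_min_linorder ridge_loss_def)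
      with \<open>a > 0\<close> show ?thesis
        by (simp add: norm_le)
    qed
    then show ?thesis
      unfolding bounded_iff by blast
  next
    case True
    then show ?thesis
      by (simp add: ridge_argmins_def is_arg_min_linorder)
  qed
next
  case (insert j I)
  let ?L1 = "L \<inter> {u. r j \<bullet> u = c j}"
  have "ridge_argmins r c (insert j I) L
      \<subseteq> convex hull (ridge_argmins r c I L \<union> ridge_argmins r c I ?L1)"
  proof
    fix y assume "y \<in> ridge_argmins r c (insert j I) L"
    then obtain a w where "a > 0" "\<forall>i\<in>insert j I. w i > 0"
      "is_arg_min (ridge_loss a w r c (insert j I)) (\<lambda>u. u \<in> L) y"
      unfolding ridge_argmins_def by blast
    then show "y \<in> convex hull (ridge_argmins r c I L \<union> ridge_argmins r c I ?L1)"
      by (intro ridge_argmin_insert_mem_convex_hull[OF insert.hyps insert.prems])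
  qed
  moreover have "bounded (ridge_argmins r c I ?L1)"
    using insert.prems by (intro insert.IH affine_Int affine_hyperplane closed_Int closed_hyperplane)
  ultimately show ?case
    using insert.IH[OF insert.prems] by (metis bounded_subset bounded_convex_hull bounded_Un)
qed

lemma outer_mult_vec: "outer u *v y = (u \<bullet> y) *\<^sub>R u"
  by (simp add: vec_eq_iff matrix_vector_mult_def outer_def inner_vec_def sum_distrib_left
      sum_distrib_right algebra_simps)

lemma sum_matrix_vector_mult: "(\<Sum>i\<in>S. A i) *v y = (\<Sum>i\<in>S. A i *v y)"
  by (induction S rule: infinite_finite_induct) (simp_all add: matrix_vector_mult_add_rdistrib)

lemma Cmat_mult_vec_inner:
  "(Cmat n x a *v y) \<bullet> d
     = (x 1 \<bullet> y) * (x 1 \<bullet> d) + (\<Sum>i\<in>{2..n}. a i * (x i \<bullet> y) * (x i \<bullet> d)) + a 1 * (y \<bullet> d)"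
  by (simp add: Cmat_def matrix_vector_mult_add_rdistrib sum_matrix_vector_mult outer_mult_vec
      scaleR_matrix_vector_assoc[symmetric] inner_add_left inner_sum_left)

lemma Cmat_symmetric: "(Cmat n x a *v y) \<bullet> d = (Cmat n x a *v d) \<bullet> y"
  unfolding Cmat_mult_vec_inner by (simp add: inner_commute mult.commute mult.left_commute)

lemma Cmat_invertible:
  assumes "n \<ge> 1" "\<forall>i\<in>{1..n}. a i > 0"
  shows "invertible (Cmat n x a)"
proof -
  have "Cmat n x a *v v = 0 \<Longrightarrow> v = 0" for v
  proof -
    assume "Cmat n x a *v v = 0"
    then have "(Cmat n x a *v v) \<bullet> v = 0"
      by simp
    moreover have "a i \<ge> 0" if "i \<in> {2..n}" for i
      using assms(2)[rule_format, of i] that by simp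
    then have "(\<Sum>i\<in>{2..n}. a i * (x i \<bullet> v) * (x i \<bullet> v)) \<ge> 0"
      by (intro sum_nonneg) (simp add: mult.assoc)
    ultimately have "a 1 * (v \<bullet> v) \<le> 0"
      using Cmat_mult_vec_inner[of n x a v v] zero_le_square[of "x 1 \<bullet> v"] by linarith
    moreover have "a 1 > 0"
      using assms by simp
    ultimately have "v \<bullet> v \<le> 0"
      by (simp add: mult_le_0_iff)
    then show "v = 0"
      by (metis inner_gt_zero_iff not_le)
  qed
  then show ?thesis
    by (simp add: invertible_left_inverse matrix_left_invertible_ker)
qed

lemma matrix_mul_matrix_inv_right:
  fixes A :: "'a::semiring_1^'n^'n"
  assumes "invertible A"
  shows "A ** matrix_inv A = mat 1"
  using someI_ex[OF assms[unfolded invertible_def]] unfolding matrix_inv_def by blast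

lemma matrix_inv_square_quadratic_form:
  fixes A :: "real^'n^'n"
  assumes "invertible A" "\<And>y d. (A *v y) \<bullet> d = (A *v d) \<bullet> y"
  shows "v \<bullet> ((matrix_inv A ** matrix_inv A) *v v) = (norm (matrix_inv A *v v))\<^sup>2"
proof -
  note inv = matrix_mul_matrix_inv_right[OF assms(1)]
  define y where "y = matrix_inv A *v v"
  have "v = A *v y"
    by (simp add: y_def matrix_vector_mul_assoc inv)
  then have "v \<bullet> ((matrix_inv A ** matrix_inv A) *v v) = (A *v y) \<bullet> (matrix_inv A *v y)"
    by (simp add: y_def matrix_vector_mul_assoc)
  also have "\<dots> = (A *v (matrix_inv A *v y)) \<bullet> y"
    by (rule assms(2))
  also have "\<dots> = y \<bullet> y"
    by (simp add: inv matrix_vector_mul_assoc)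
  finally show ?thesis
    by (simp add: y_def power2_norm_eq_inner)
qed

text \<open>The weights attach 1 to x 1 and a i to the other x i; the ridge parameter is a 1.\<close>
lemma Cmat_inverse_mem_ridge_argmins:
  assumes "n \<ge> 1" "\<forall>i\<in>{1..n}. a i > 0"
  shows "matrix_inv (Cmat n x a) *v x 1 \<in> ridge_argmins x (\<lambda>i. if i = 1 then 1 else 0) {1..n} UNIV"
proof -
  let ?M = "Cmat n x a" and ?c = "\<lambda>i::nat. if i = 1 then 1 else 0::real"
  define w where "w i = (if i = 1 then 1 else a i)" for i :: nat
  define y where "y = matrix_inv ?M *v x 1"
  have My: "?M *v y = x 1"
    by (simp add: y_def matrix_vector_mul_assoc matrix_mul_matrix_inv_right[OF Cmat_invertible[OF assms]])
  have "{1..n} = insert 1 {2..n}"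
    using assms(1) by auto
  moreover have "(\<Sum>i\<in>{2..n}. w i * (x i \<bullet> y - ?c i) * (x i \<bullet> d))
      = (\<Sum>i\<in>{2..n}. a i * (x i \<bullet> y) * (x i \<bullet> d))" for d
    by (rule sum.cong) (auto simp: w_def)
  ultimately have "ridge_grad (a 1) w x ?c {1..n} y d = (?M *v y) \<bullet> d - x 1 \<bullet> d" for d
    by (simp add: ridge_grad_def Cmat_mult_vec_inner w_def algebra_simps)
  then have "is_arg_min (ridge_loss (a 1) w x ?c {1..n}) (\<lambda>u. u \<in> UNIV) y"
    using assms is_arg_min_ridge_loss_iff[of UNIV y "a 1" "{1..n}" w x ?c]
    by (simp add: My w_def less_imp_le)
  moreover have "a 1 > 0" "\<forall>i\<in>{1..n}. w i > 0"
    using assms by (simp_all add: w_def)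
  ultimately show ?thesis
    unfolding ridge_argmins_def y_def by blast
qed

theorem lemma3:
  fixes n :: nat and x :: "nat \<Rightarrow> real^'p"
  assumes "n \<ge> 1"
  shows "C n x < \<infinity>"
proof -
  have "bounded (ridge_argmins x (\<lambda>i. if i = 1 then 1 else 0) {1..n} UNIV)"
    by (rule bounded_ridge_argmins) auto
  then obtain K where K: "\<And>y. y \<in> ridge_argmins x (\<lambda>i. if i = 1 then 1 else 0) {1..n} UNIV \<Longrightarrow> norm y \<le> K"
    unfolding bounded_iff by blast
  have "x 1 \<bullet> ((matrix_inv (Cmat n x a) ** matrix_inv (Cmat n x a)) *v x 1) \<le> K\<^sup>2"
    if "\<forall>i\<in>{1..n}. a i > 0" for a
  proof -
    have "norm (matrix_inv (Cmat n x a) *v x 1) \<le> K"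
      using K Cmat_inverse_mem_ridge_argmins[OF assms that] by blast
    then have "(norm (matrix_inv (Cmat n x a) *v x 1))\<^sup>2 \<le> K\<^sup>2"
      by (simp add: power_mono)
    then show ?thesis
      by (simp add: matrix_inv_square_quadratic_form[OF Cmat_invertible[OF assms that] Cmat_symmetric])
  qed
  then have "C n x \<le> ereal (K\<^sup>2)"
    unfolding C_def by (intro SUP_least) simp
  moreover have "ereal (K\<^sup>2) < \<infinity>"
    by simp
  ultimately show ?thesis
    by (rule order.strict_trans1)
qed

end
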